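(* Let $S$ be a semiring. If $\mathcal{A}=(A,X,Y,a_0,\delta,\omega)$ is a crisp-deterministic Mealy-type weighted automaton over $S$, then $[\![\mathcal{A}]\!]_{cd}=[\![\mathcal{A}]\!]_{1n}=[\![\mathcal{A}]\!]_{n1}=[\![\mathcal{A}]\!]_s$. If $\mathcal{A}=(A,X,Y,a_0,\delta,\omega)$ is a crisp-deterministic Moore-type weighted automaton over $S$, then $[\![\mathcal{A}]\!]_{cd}=[\![\mathcal{A}]\!]_{1n}=[\![\mathcal{A}]\!]_{n1}$.
   Context: A semiring $(S,+,\cdot,0,1)$ is a set with $(S,+,0)$ a commutative monoid, $(S,\cdot,1)$ a monoid (not necessarily commutative), $\cdot$ distributing over $+$ on both sides, and $0\cdot s=s\cdot 0=0$. $(X\times Y)^*$ is identified with pairs $(u,v)\in X^*\times Y^*$ with $|u|=|v|$; empty element $(\varepsilon,\varepsilon)$. $A,X,Y$ are finite nonempty sets. A crisp-deterministic Mealy-type (resp. Moore-type) weighted automaton is $\mathcal{A}=(A,X,Y,a_0,\delta,\omega)$ with $a_0\in A$, a transition function $\delta:A\times X\to A$, and $\omega:A\times X\times Y\to S$ (resp. $\omega:A\times Y\to S$). Write $\delta_x(a)=\delta(a,x)$, $\delta_\varepsilon(a)=a$, $\delta_{wx}(a)=\delta_x(\delta_w(a))$, and $\omega_{x,y}(a)=\omega(a,x,y)$ (resp. $\omega_y(a)=\omega(a,y)$). It is regarded as a general weighted automaton with initial weight vector $\sigma(a_0)=1$, $\sigma(a)=0$ for $a\ne a_0$, and weighted transitions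 $\hat\delta_x(a,b)=1$ if $b=\delta(a,x)$ and $0$ otherwise; for $w=z_1\cdots z_m\in X^+$ put $\hat\delta_w=\hat\delta_{z_1}\cdots\hat\delta_{z_m}$ (matrix product over $S$). cd-behavior: $[\![\mathcal{A}]\!]_{cd}(\varepsilon,\varepsilon)=1$ and for $u=x_1\cdots x_n$, $v=y_1\cdots y_n$, $n\ge1$: in the Mealy case $[\![\mathcal{A}]\!]_{cd}(u,v)=\omega_{x_1,y_1}(a_0)\cdot\omega_{x_2,y_2}(\delta_{x_1}(a_0))\cdots\omega_{x_n,y_n}(\delta_{x_1\cdots x_{n-1}}(a_0))$; in the Moore case $[\![\mathcal{A}]\!]_{cd}(u,v)=\omega_{y_1}(\delta_{x_1}(a_0))\cdot\omega_{y_2}(\delta_{x_1x_2}(a_0))\cdots\omega_{y_n}(\delta_{x_1\cdots x_n}(a_0))$. All of the following behaviors take value $\sum_{a\in A}\sigma(a)$ at $(\varepsilon,\varepsilon)$; for $u=x_1\cdots x_n$, $v=y_1\cdots y_n$, $n\ge1$: Mealy $1n$: $\sum_{(a_0',\dots,a_{n-1}')\in A^n}\sigma(a_0')\omega_{x_1,y_1}(a_0')\hat\delta_{x_1}(a_0',a_1')\omega_{x_2,y_2}(a_1')\cdots\hat\delta_{x_{n-1}}(a_{n-2}',a_{n-1}')\omega_{x_n,y_n}(a_{n-1}')$. Mealy $n1$: $\sum_{(a_0',\dots,a_{n-1}')\in A^n}\sigma(a_0')\omega_{x_1,y_1}(a_0')\hat\delta_{x_1}(a_0',a_1')\omega_{x_2,y_2}(a_1')\hat\delta_{x_1x_2}(a_0',a_2')\omega_{x_3,y_3}(a_2')\cdots\hat\delta_{x_1\cdots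 x_{n-1}}(a_0',a_{n-1}')\omega_{x_n,y_n}(a_{n-1}')$. Mealy sequential $s$: $\sum_{(a_0',\dots,a_n')\in A^{n+1}}\sigma(a_0')\omega_{x_1,y_1}(a_0')\hat\delta_{x_1}(a_0',a_1')\cdots\omega_{x_n,y_n}(a_{n-1}')\hat\delta_{x_n}(a_{n-1}',a_n')$. Moore $1n$: $\sum_{(a_0',\dots,a_n')\in A^{n+1}}\sigma(a_0')\hat\delta_{x_1}(a_0',a_1')\omega_{y_1}(a_1')\cdots\hat\delta_{x_n}(a_{n-1}',a_n')\omega_{y_n}(a_n')$. Moore $n1$: $\sum_{(a_0',\dots,a_n')\in A^{n+1}}\sigma(a_0')\hat\delta_{x_1}(a_0',a_1')\omega_{y_1}(a_1')\hat\delta_{x_1x_2}(a_0',a_2')\omega_{y_2}(a_2')\cdots\hat\delta_{x_1\cdots x_n}(a_0',a_n')\omega_{y_n}(a_n')$. *)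

theory Defs
  imports Main
begin

text \<open>Semiring: commutative additive monoid, multiplicative monoid (not necessarily
commutative), two-sided distributivity, zero annihilating. In Isabelle this is the sort
{semiring_0, monoid_mult} (we avoid semiring_1 since it additionally demands 0 \<noteq> 1). Words in (X \<times> Y)^*
are pairs of lists of equal length; list index i corresponds to position i+1 of the paper.\<close>

definition delta_word :: "('a \<Rightarrow> 'x \<Rightarrow> 'a) \<Rightarrow> 'x list \<Rightarrow> 'a \<Rightarrow> 'a" where
  "delta_word \<delta> w a = fold (\<lambda>x b. \<delta> b x) w a"

definition sigma :: "'a \<Rightarrow> 'a \<Rightarrow> 's::{semiring_0,monoid_mult}" where
  "sigma a0 a = (if a = a0 then 1 else 0)"

definition hat_delta :: "('a \<Rightarrow> 'x \<Rightarrow> 'a) \<Rightarrow> 'x \<Rightarrow> 'a \<Rightarrow> 'a \<Rightarrow> 's::{semiring_0,monoid_mult}" where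
  "hat_delta \<delta> x a b = (if b = \<delta> a x then 1 else 0)"

fun hat_delta_word :: "('a::finite \<Rightarrow> 'x \<Rightarrow> 'a) \<Rightarrow> 'x list \<Rightarrow> 'a \<Rightarrow> 'a \<Rightarrow> 's::{semiring_0,monoid_mult}" where
  "hat_delta_word \<delta> [] a b = (if a = b then 1 else 0)"
| "hat_delta_word \<delta> (x # w) a b = (\<Sum>c\<in>UNIV. hat_delta \<delta> x a c * hat_delta_word \<delta> w c b)"

definition mealy_cd :: "'a \<Rightarrow> ('a \<Rightarrow> 'x \<Rightarrow> 'a) \<Rightarrow> ('a \<Rightarrow> 'x \<Rightarrow> 'y \<Rightarrow> 's::{semiring_0,monoid_mult})
    \<Rightarrow> 'x list \<Rightarrow> 'y list \<Rightarrow> 's" where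
  "mealy_cd a0 \<delta> \<omega> u v =
    (if length u = 0 then 1
     else prod_list (map (\<lambda>i. \<omega> (delta_word \<delta> (take i u) a0) (u ! i) (v ! i)) [0..<length u]))"

definition mealy_1n :: "'a::finite \<Rightarrow> ('a \<Rightarrow> 'x \<Rightarrow> 'a) \<Rightarrow> ('a \<Rightarrow> 'x \<Rightarrow> 'y \<Rightarrow> 's::{semiring_0,monoid_mult})
    \<Rightarrow> 'x list \<Rightarrow> 'y list \<Rightarrow> 's" where
  "mealy_1n a0 \<delta> \<omega> u v =
    (if length u = 0 then (\<Sum>a\<in>UNIV. sigma a0 a)
     else (\<Sum>as\<in>{as::'a list. length as = length u}.
        sigma a0 (as ! 0) *
        prod_list (map (\<lambda>i. (if i = 0 then 1 else hat_delta \<delta> (u ! (i - 1)) (as ! (i - 1)) (as ! i))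
                             * \<omega> (as ! i) (u ! i) (v ! i)) [0..<length u])))"

definition mealy_n1 :: "'a::finite \<Rightarrow> ('a \<Rightarrow> 'x \<Rightarrow> 'a) \<Rightarrow> ('a \<Rightarrow> 'x \<Rightarrow> 'y \<Rightarrow> 's::{semiring_0,monoid_mult})
    \<Rightarrow> 'x list \<Rightarrow> 'y list \<Rightarrow> 's" where
  "mealy_n1 a0 \<delta> \<omega> u v =
    (if length u = 0 then (\<Sum>a\<in>UNIV. sigma a0 a)
     else (\<Sum>as\<in>{as::'a list. length as = length u}.
        sigma a0 (as ! 0) *
        prod_list (map (\<lambda>i. (if i = 0 then 1 else hat_delta_word \<delta> (take i u) (as ! 0) (as ! i))
                             * \<omega> (as ! i) (u ! i) (v ! i)) [0..<length u])))"

definition mealy_s :: "'a::finite \<Rightarrow> ('a \<Rightarrow> 'x \<Rightarrow> 'a) \<Rightarrow> ('a \<Rightarrow> 'x \<Rightarrow> 'y \<Rightarrow> 's::{semiring_0,monoid_mult})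
    \<Rightarrow> 'x list \<Rightarrow> 'y list \<Rightarrow> 's" where
  "mealy_s a0 \<delta> \<omega> u v =
    (if length u = 0 then (\<Sum>a\<in>UNIV. sigma a0 a)
     else (\<Sum>as\<in>{as::'a list. length as = length u + 1}.
        sigma a0 (as ! 0) *
        prod_list (map (\<lambda>i. \<omega> (as ! i) (u ! i) (v ! i) * hat_delta \<delta> (u ! i) (as ! i) (as ! (i + 1)))
                       [0..<length u])))"

definition moore_cd :: "'a \<Rightarrow> ('a \<Rightarrow> 'x \<Rightarrow> 'a) \<Rightarrow> ('a \<Rightarrow> 'y \<Rightarrow> 's::{semiring_0,monoid_mult})
    \<Rightarrow> 'x list \<Rightarrow> 'y list \<Rightarrow> 's" where
  "moore_cd a0 \<delta> \<omega> u v =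
    (if length u = 0 then 1
     else prod_list (map (\<lambda>i. \<omega> (delta_word \<delta> (take (i + 1) u) a0) (v ! i)) [0..<length u]))"

definition moore_1n :: "'a::finite \<Rightarrow> ('a \<Rightarrow> 'x \<Rightarrow> 'a) \<Rightarrow> ('a \<Rightarrow> 'y \<Rightarrow> 's::{semiring_0,monoid_mult})
    \<Rightarrow> 'x list \<Rightarrow> 'y list \<Rightarrow> 's" where
  "moore_1n a0 \<delta> \<omega> u v =
    (if length u = 0 then (\<Sum>a\<in>UNIV. sigma a0 a)
     else (\<Sum>as\<in>{as::'a list. length as = length u + 1}.
        sigma a0 (as ! 0) *
        prod_list (map (\<lambda>i. hat_delta \<delta> (u ! i) (as ! i) (as ! (i + 1)) * \<omega> (as ! (i + 1)) (v ! i))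
                       [0..<length u])))"

definition moore_n1 :: "'a::finite \<Rightarrow> ('a \<Rightarrow> 'x \<Rightarrow> 'a) \<Rightarrow> ('a \<Rightarrow> 'y \<Rightarrow> 's::{semiring_0,monoid_mult})
    \<Rightarrow> 'x list \<Rightarrow> 'y list \<Rightarrow> 's" where
  "moore_n1 a0 \<delta> \<omega> u v =
    (if length u = 0 then (\<Sum>a\<in>UNIV. sigma a0 a)
     else (\<Sum>as\<in>{as::'a list. length as = length u + 1}.
        sigma a0 (as ! 0) *
        prod_list (map (\<lambda>i. hat_delta_word \<delta> (take (i + 1) u) (as ! 0) (as ! (i + 1)) * \<omega> (as ! (i + 1)) (v ! i))
                       [0..<length u])))"

end

theory Submission
  imports Defs
begin

text \<open>A crisp-deterministic automaton has exactly one run on an input word \<open>u\<close>, the state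
sequence \<open>\<delta>\<^sub>x\<^sub>1\<^sub>\<cdots>\<^sub>x\<^sub>i(a\<^sub>0)\<close>. In each path-sum behaviour the initial weight \<open>\<sigma>\<close> kills the state
sequences that do not start in \<open>a\<^sub>0\<close>, and at the first position where a sequence leaves the run
a transition factor vanishes: the one-step matrix from the previous state in the \<open>1n\<close> and
sequential variants, the matrix of the whole prefix from the initial state in the \<open>n1\<close> variants.
Each sum therefore collapses to the weight of the run, whose transition factors are all \<open>1\<close>,
leaving the product that defines the \<open>cd\<close>-behaviour.\<close>

lemma prod_list_map_eq_zeroI:
  "x \<in> set xs \<Longrightarrow> f x = 0 \<Longrightarrow> prod_list (map f xs) = (0::'a::{mult_zero,monoid_mult})"
  by (induction xs) auto

lemma sum_lists_eq_single_first_mismatch: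
  fixes F :: "'a::finite list \<Rightarrow> 'b::comm_monoid_add"
  assumes "length r = m"
    and vanish: "\<And>as j. length as = m \<Longrightarrow> j < m \<Longrightarrow> \<forall>k<j. as ! k = r ! k \<Longrightarrow> as ! j \<noteq> r ! j
                   \<Longrightarrow> F as = 0"
  shows "(\<Sum>as | length as = m. F as) = F r"
proof -
  have "F as = 0" if as: "length as = m" "as \<noteq> r" for as
  proof -
    have "\<exists>j<m. as ! j \<noteq> r ! j"
    proof (rule ccontr)
      assume "\<not> (\<exists>j<m. as ! j \<noteq> r ! j)"
      then have "as = r" using as(1) \<open>length r = m\<close> by (auto intro: nth_equalityI)
      with as(2) show False ..
    qed
    define j where "j = (LEAST j. j < m \<and> as ! j \<noteq> r ! j)"
    have mismatch: "j < m \<and> as ! j \<noteq> r ! j"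
      unfolding j_def using \<open>\<exists>j<m. _\<close> by (rule LeastI_ex)
    have "as ! k = r ! k" if "k < j" for k
      using not_less_Least[OF that[unfolded j_def]] that mismatch by auto
    then show ?thesis using mismatch by (intro vanish[OF as(1)]) auto
  qed
  moreover have "finite {as::'a list. length as = m}"
    using finite_lists_length_eq[of "UNIV::'a set" m] by simp
  ultimately have "(\<Sum>as | length as = m. F as) = sum F {r}"
    using \<open>length r = m\<close> by (intro sum.mono_neutral_right) auto
  then show ?thesis by simp
qed

definition run :: "('a \<Rightarrow> 'x \<Rightarrow> 'a) \<Rightarrow> 'a \<Rightarrow> 'x list \<Rightarrow> nat \<Rightarrow> 'a list" where
  "run \<delta> a0 u m = map (\<lambda>i. delta_word \<delta> (take i u) a0) [0..<m]"

lemma length_run [simp]: "length (run \<delta> a0 u m) = m"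
  by (simp add: run_def)

lemma nth_run [simp]: "i < m \<Longrightarrow> run \<delta> a0 u m ! i = delta_word \<delta> (take i u) a0"
  by (simp add: run_def)

lemma delta_word_Nil [simp]: "delta_word \<delta> [] a = a"
  by (simp add: delta_word_def)

lemma delta_word_take_Suc:
  "i < length u \<Longrightarrow> delta_word \<delta> (take (Suc i) u) a = \<delta> (delta_word \<delta> (take i u) a) (u ! i)"
  by (simp add: delta_word_def take_Suc_conv_app_nth)

lemma hat_delta_word_eq:
  "hat_delta_word \<delta> w a b = (if b = delta_word \<delta> w a then 1 else (0::'s::{semiring_0,monoid_mult}))"
proof (induction w arbitrary: a)
  case (Cons x w)
  have "hat_delta_word \<delta> (x # w) a b
      = (\<Sum>c\<in>UNIV. if c = \<delta> a x then hat_delta_word \<delta> w c b else (0::'s))"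
    unfolding hat_delta_word.simps hat_delta_def by (rule sum.cong) simp_all
  also have "\<dots> = hat_delta_word \<delta> w (\<delta> a x) b"
    by simp
  also have "\<dots> = (if b = delta_word \<delta> (x # w) a then 1 else 0)"
    unfolding Cons.IH by (simp add: delta_word_def)
  finally show ?case .
qed simp

lemma sum_sigma: "(\<Sum>a\<in>UNIV. sigma (a0::'a::finite) a) = (1::'s::{semiring_0,monoid_mult})"
  by (simp add: sigma_def)

lemma path_sum_eq_run_weight:
  fixes g :: "'a::finite list \<Rightarrow> nat \<Rightarrow> 's::{semiring_0,monoid_mult}"
  assumes "length r = m" "0 < m" "r ! 0 = a0"
    and vanish: "\<And>as j. length as = m \<Longrightarrow> Suc j < m \<Longrightarrow> as ! 0 = a0 \<Longrightarrow> \<forall>k\<le>j. as ! k = r ! k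
                   \<Longrightarrow> as ! Suc j \<noteq> r ! Suc j \<Longrightarrow> \<exists>i<n. g as i = 0"
  shows "(\<Sum>as | length as = m. sigma a0 (as ! 0) * prod_list (map (g as) [0..<n]))
       = prod_list (map (g r) [0..<n])"
proof -
  have "(\<Sum>as | length as = m. sigma a0 (as ! 0) * prod_list (map (g as) [0..<n]))
      = sigma a0 (r ! 0) * prod_list (map (g r) [0..<n])"
  proof (rule sum_lists_eq_single_first_mismatch[OF \<open>length r = m\<close>])
    fix as j assume as: "length as = m" "j < m" "\<forall>k<j. as ! k = r ! k" "as ! j \<noteq> r ! j"
    show "sigma a0 (as ! 0) * prod_list (map (g as) [0..<n]) = 0"
    proof (cases j)
      case 0
      then show ?thesis using as \<open>r ! 0 = a0\<close> by (simp add: sigma_def)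
    next
      case (Suc j')
      then have "as ! 0 = a0" using as \<open>r ! 0 = a0\<close> by auto
      then obtain i where "i < n" "g as i = 0"
        using vanish[of as j'] as Suc less_Suc_eq_le by blast
      then show ?thesis by (simp add: prod_list_map_eq_zeroI)
    qed
  qed
  then show ?thesis using \<open>r ! 0 = a0\<close> by (simp add: sigma_def)
qed

lemma mealy_1n_eq_mealy_cd:
  fixes a0 :: "'a::finite" and \<omega> :: "'a \<Rightarrow> 'x \<Rightarrow> 'y \<Rightarrow> 's::{semiring_0,monoid_mult}"
  shows "mealy_1n a0 \<delta> \<omega> u v = mealy_cd a0 \<delta> \<omega> u v"
proof (cases "u = []")
  case True
  then show ?thesis by (simp add: mealy_1n_def mealy_cd_def sum_sigma)
next
  case False
  define w where "w = (\<lambda>as i. (if i = 0 then 1 else hat_delta \<delta> (u ! (i - 1)) (as ! (i - 1)) (as ! i))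
                              * \<omega> (as ! i) (u ! i) (v ! i))"
  let ?r = "run \<delta> a0 u (length u)"
  have "mealy_1n a0 \<delta> \<omega> u v
      = (\<Sum>as | length as = length u. sigma a0 (as ! 0) * prod_list (map (w as) [0..<length u]))"
    using False by (simp add: mealy_1n_def w_def)
  also have "\<dots> = prod_list (map (w ?r) [0..<length u])"
  proof (rule path_sum_eq_run_weight)
    fix as j
    assume as: "Suc j < length u" "\<forall>k\<le>j. as ! k = ?r ! k" "as ! Suc j \<noteq> ?r ! Suc j"
    then have "as ! Suc j \<noteq> \<delta> (as ! j) (u ! j)" by (simp add: delta_word_take_Suc)
    then have "w as (Suc j) = 0" by (simp add: w_def hat_delta_def)
    then show "\<exists>i<length u. w as i = 0" using as(1) by blast
  qed (use False in auto)
  also have "\<dots> = mealy_cd a0 \<delta> \<omega> u v"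
  proof -
    have "w ?r i = \<omega> (delta_word \<delta> (take i u) a0) (u ! i) (v ! i)" if "i < length u" for i
      using that by (cases i) (simp_all add: w_def hat_delta_def delta_word_take_Suc)
    then show ?thesis using False by (auto simp: mealy_cd_def intro!: arg_cong[where f = prod_list])
  qed
  finally show ?thesis .
qed

lemma mealy_n1_eq_mealy_cd:
  fixes a0 :: "'a::finite" and \<omega> :: "'a \<Rightarrow> 'x \<Rightarrow> 'y \<Rightarrow> 's::{semiring_0,monoid_mult}"
  shows "mealy_n1 a0 \<delta> \<omega> u v = mealy_cd a0 \<delta> \<omega> u v"
proof (cases "u = []")
  case True
  then show ?thesis by (simp add: mealy_n1_def mealy_cd_def sum_sigma)
next
  case False
  define w where "w = (\<lambda>as i. (if i = 0 then 1 else hat_delta_word \<delta> (take i u) (as ! 0) (as ! i))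
                              * \<omega> (as ! i) (u ! i) (v ! i))"
  let ?r = "run \<delta> a0 u (length u)"
  have "mealy_n1 a0 \<delta> \<omega> u v
      = (\<Sum>as | length as = length u. sigma a0 (as ! 0) * prod_list (map (w as) [0..<length u]))"
    using False by (simp add: mealy_n1_def w_def)
  also have "\<dots> = prod_list (map (w ?r) [0..<length u])"
  proof (rule path_sum_eq_run_weight)
    fix as j
    assume "Suc j < length u" "as ! 0 = a0" "as ! Suc j \<noteq> ?r ! Suc j"
    then show "\<exists>i<length u. w as i = 0"
      by (intro exI[of _ "Suc j"]) (simp add: w_def hat_delta_word_eq)
  qed (use False in auto)
  also have "\<dots> = mealy_cd a0 \<delta> \<omega> u v"
  proof -
    have "w ?r i = \<omega> (delta_word \<delta> (take i u) a0) (u ! i) (v ! i)" if "i < length u" for i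
      using that False by (simp add: w_def hat_delta_word_eq)
    then show ?thesis using False by (auto simp: mealy_cd_def intro!: arg_cong[where f = prod_list])
  qed
  finally show ?thesis .
qed

lemma mealy_s_eq_mealy_cd:
  fixes a0 :: "'a::finite" and \<omega> :: "'a \<Rightarrow> 'x \<Rightarrow> 'y \<Rightarrow> 's::{semiring_0,monoid_mult}"
  shows "mealy_s a0 \<delta> \<omega> u v = mealy_cd a0 \<delta> \<omega> u v"
proof (cases "u = []")
  case True
  then show ?thesis by (simp add: mealy_s_def mealy_cd_def sum_sigma)
next
  case False
  define w where "w = (\<lambda>as i. \<omega> (as ! i) (u ! i) (v ! i) * hat_delta \<delta> (u ! i) (as ! i) (as ! Suc i))"
  let ?r = "run \<delta> a0 u (Suc (length u))"
  have "mealy_s a0 \<delta> \<omega> u v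
      = (\<Sum>as | length as = Suc (length u). sigma a0 (as ! 0) * prod_list (map (w as) [0..<length u]))"
    using False by (simp add: mealy_s_def w_def)
  also have "\<dots> = prod_list (map (w ?r) [0..<length u])"
  proof (rule path_sum_eq_run_weight)
    fix as j
    assume as: "Suc j < Suc (length u)" "\<forall>k\<le>j. as ! k = ?r ! k" "as ! Suc j \<noteq> ?r ! Suc j"
    then have "as ! Suc j \<noteq> \<delta> (as ! j) (u ! j)" by (simp add: delta_word_take_Suc)
    then have "w as j = 0" by (simp add: w_def hat_delta_def)
    then show "\<exists>i<length u. w as i = 0" using as(1) by auto
  qed auto
  also have "\<dots> = mealy_cd a0 \<delta> \<omega> u v"
  proof -
    have "w ?r i = \<omega> (delta_word \<delta> (take i u) a0) (u ! i) (v ! i)" if "i < length u" for i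
      using that by (simp add: w_def hat_delta_def delta_word_take_Suc)
    then show ?thesis using False by (auto simp: mealy_cd_def intro!: arg_cong[where f = prod_list])
  qed
  finally show ?thesis .
qed

lemma moore_1n_eq_moore_cd:
  fixes a0 :: "'a::finite" and \<omega> :: "'a \<Rightarrow> 'y \<Rightarrow> 's::{semiring_0,monoid_mult}"
  shows "moore_1n a0 \<delta> \<omega> u v = moore_cd a0 \<delta> \<omega> u v"
proof (cases "u = []")
  case True
  then show ?thesis by (simp add: moore_1n_def moore_cd_def sum_sigma)
next
  case False
  define w where "w = (\<lambda>as i. hat_delta \<delta> (u ! i) (as ! i) (as ! Suc i) * \<omega> (as ! Suc i) (v ! i))"
  let ?r = "run \<delta> a0 u (Suc (length u))"
  have "moore_1n a0 \<delta> \<omega> u v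
      = (\<Sum>as | length as = Suc (length u). sigma a0 (as ! 0) * prod_list (map (w as) [0..<length u]))"
    using False by (simp add: moore_1n_def w_def)
  also have "\<dots> = prod_list (map (w ?r) [0..<length u])"
  proof (rule path_sum_eq_run_weight)
    fix as j
    assume as: "Suc j < Suc (length u)" "\<forall>k\<le>j. as ! k = ?r ! k" "as ! Suc j \<noteq> ?r ! Suc j"
    then have "as ! Suc j \<noteq> \<delta> (as ! j) (u ! j)" by (simp add: delta_word_take_Suc)
    then have "w as j = 0" by (simp add: w_def hat_delta_def)
    then show "\<exists>i<length u. w as i = 0" using as(1) by auto
  qed auto
  also have "\<dots> = moore_cd a0 \<delta> \<omega> u v"
  proof -
    have "w ?r i = \<omega> (delta_word \<delta> (take (i + 1) u) a0) (v ! i)" if "i < length u" for i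
      using that by (simp add: w_def hat_delta_def delta_word_take_Suc)
    then show ?thesis using False by (auto simp: moore_cd_def intro!: arg_cong[where f = prod_list])
  qed
  finally show ?thesis .
qed

lemma moore_n1_eq_moore_cd:
  fixes a0 :: "'a::finite" and \<omega> :: "'a \<Rightarrow> 'y \<Rightarrow> 's::{semiring_0,monoid_mult}"
  shows "moore_n1 a0 \<delta> \<omega> u v = moore_cd a0 \<delta> \<omega> u v"
proof (cases "u = []")
  case True
  then show ?thesis by (simp add: moore_n1_def moore_cd_def sum_sigma)
next
  case False
  define w where "w = (\<lambda>as i. hat_delta_word \<delta> (take (Suc i) u) (as ! 0) (as ! Suc i) * \<omega> (as ! Suc i) (v ! i))"
  let ?r = "run \<delta> a0 u (Suc (length u))"
  have "moore_n1 a0 \<delta> \<omega> u v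
      = (\<Sum>as | length as = Suc (length u). sigma a0 (as ! 0) * prod_list (map (w as) [0..<length u]))"
    using False by (simp add: moore_n1_def w_def)
  also have "\<dots> = prod_list (map (w ?r) [0..<length u])"
  proof (rule path_sum_eq_run_weight)
    fix as j
    assume "Suc j < Suc (length u)" "as ! 0 = a0" "as ! Suc j \<noteq> ?r ! Suc j"
    then show "\<exists>i<length u. w as i = 0"
      by (intro exI[of _ j]) (simp add: w_def hat_delta_word_eq)
  qed auto
  also have "\<dots> = moore_cd a0 \<delta> \<omega> u v"
  proof -
    have "w ?r i = \<omega> (delta_word \<delta> (take (i + 1) u) a0) (v ! i)" if "i < length u" for i
      using that by (simp add: w_def hat_delta_word_eq)
    then show ?thesis using False by (auto simp: moore_cd_def intro!: arg_cong[where f = prod_list])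
  qed
  finally show ?thesis .
qed

theorem theorem7:
  fixes a0 :: "'a::finite" and \<delta> :: "'a \<Rightarrow> 'x::finite \<Rightarrow> 'a"
    and \<omega> :: "'a \<Rightarrow> 'x \<Rightarrow> 'y::finite \<Rightarrow> 's::{semiring_0,monoid_mult}"
    and b0 :: "'b::finite" and \<delta>' :: "'b \<Rightarrow> 'x2::finite \<Rightarrow> 'b"
    and \<omega>' :: "'b \<Rightarrow> 'y2::finite \<Rightarrow> 's"
  shows "(\<forall>u v. length u = length v \<longrightarrow>
            mealy_cd a0 \<delta> \<omega> u v = mealy_1n a0 \<delta> \<omega> u v \<and>
            mealy_1n a0 \<delta> \<omega> u v = mealy_n1 a0 \<delta> \<omega> u v \<and>
            mealy_n1 a0 \<delta> \<omega> u v = mealy_s a0 \<delta> \<omega> u v)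
       \<and> (\<forall>u v. length u = length v \<longrightarrow>
            moore_cd b0 \<delta>' \<omega>' u v = moore_1n b0 \<delta>' \<omega>' u v \<and>
            moore_1n b0 \<delta>' \<omega>' u v = moore_n1 b0 \<delta>' \<omega>' u v)"
  by (simp add: mealy_1n_eq_mealy_cd mealy_n1_eq_mealy_cd mealy_s_eq_mealy_cd
      moore_1n_eq_moore_cd moore_n1_eq_moore_cd)

end
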